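(* Assume $n\geq 10^6$, let $t$ be a node of maximum popularity (so $\mu_t\ge\mu_k$ for all nodes $k$), and assume $\xi_t\geq 8200\ln n$. Let $\ell\in\{0,1,2\}$, and let $h$ be an integer and $k$ a node such that $h\in Z_t$ and $h-2\in Z_k$. Then $$\Pr[d_k(\mathbf{x})=h-\ell]\;\leq\;264\,e\sqrt{\frac{\ln n}{\xi_t}}\cdot\Pr[d_k(\mathbf{x})>h].$$
   Context: Setting: a priori popularity model on $n+1$ agents, where each directed edge $(i,j)$, $i\ne j$, is present independently with probability $p_j$, so the in-degree $d_k(\mathbf{x})\sim\mathrm{Bin}(n,p_k)$. Let $\mu_k=p_kn$ and $\xi_k=\min\{\mu_k,n-\mu_k\}$. The comfort zone of node $k$ is $Z_k=\{L_k,\dots,U_k\}$, where $L_k$ is the highest integer $c$ with $\Pr[d_k(\mathbf{x})<c]\leq n^{-5.33}$ (or $0$ if none exists) and $U_k$ is the lowest integer $c$ with $\Pr[d_k(\mathbf{x})>c]\leq n^{-5.33}$ (or $n$ if none exists). *)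

theory Defs
  imports "HOL-Probability.Probability"
begin

text \<open>In-degree of a node with popularity q in the a priori popularity model on n+1 agents:
  d ~ Bin(n, q), modelled by the library's binomial_pmf.\<close>

definition lowTail :: "nat \<Rightarrow> real \<Rightarrow> int \<Rightarrow> real" where
  "lowTail n q c = measure_pmf.prob (binomial_pmf n q) {i. int i < c}"

definition highTail :: "nat \<Rightarrow> real \<Rightarrow> int \<Rightarrow> real" where
  "highTail n q c = measure_pmf.prob (binomial_pmf n q) {i. int i > c}"

definition compL :: "nat \<Rightarrow> real \<Rightarrow> int" where
  "compL n q = (if \<exists>c::int. lowTail n q c \<le> real n powr (-(533/100))
               then (GREATEST c::int. lowTail n q c \<le> real n powr (-(533/100))) else 0)"

definition compU :: "nat \<Rightarrow> real \<Rightarrow> int" where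
  "compU n q = (if \<exists>c::int. highTail n q c \<le> real n powr (-(533/100))
               then (LEAST c::int. highTail n q c \<le> real n powr (-(533/100))) else int n)"

definition comfortZone :: "nat \<Rightarrow> real \<Rightarrow> int set" where
  "comfortZone n q = {compL n q .. compU n q}"

definition xi :: "nat \<Rightarrow> real \<Rightarrow> real" where
  "xi n q = min (q * real n) (real n - q * real n)"

end

(* By the Chernoff bound, the comfort zone of a node of popularity q lies within
   tail_radius (ln n) (n q (1 - q)) = O(sqrt (xi ln n)) of its mean n q.  For h in Z_t and
   h - 2 in Z_k this confines h - 2, ..., h + m, with m about sqrt (xi_t / ln n) / 264, to a
   window just above n q_k on which the ratio of consecutive point probabilities of
   Bin(n, q_k) stays at least (m + 2) / (m + 3).  Hence each of the m values h + 1, ..., h + m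
   has probability at least Pr[d = h - l] / e, and summing them bounds Pr[d > h] from below. *)

theory Submission
  imports Defs
begin

lemma measure_binomial_pmf_eq_sum:
  assumes "0 \<le> q" "q \<le> 1"
  shows "measure_pmf.prob (binomial_pmf n q) B = (\<Sum>k\<in>B \<inter> {..n}. pmf (binomial_pmf n q) k)"
proof -
  have "set_pmf (binomial_pmf n q) \<subseteq> {..n}"
    using assms by (auto simp: set_pmf_binomial_eq)
  then have "B \<inter> set_pmf (binomial_pmf n q) = (B \<inter> {..n}) \<inter> set_pmf (binomial_pmf n q)"
    by auto
  then have "measure_pmf.prob (binomial_pmf n q) B = measure_pmf.prob (binomial_pmf n q) (B \<inter> {..n})"
    by (metis measure_Int_set_pmf)
  also have "\<dots> = (\<Sum>k\<in>B \<inter> {..n}. pmf (binomial_pmf n q) k)"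
    by (rule measure_measure_pmf_finite) simp
  finally show ?thesis .
qed

lemma binomial_pmf_mgf:
  assumes "0 \<le> q" "q \<le> 1"
  shows "(\<Sum>k\<le>n. pmf (binomial_pmf n q) k * exp (lam * real k)) = (1 - q + q * exp lam) ^ n"
proof -
  have "(q * exp lam + (1 - q)) ^ n = (\<Sum>k\<le>n. real (n choose k) * (q * exp lam) ^ k * (1 - q) ^ (n - k))"
    by (subst binomial_ring) (simp add: atLeast0AtMost)
  also have "\<dots> = (\<Sum>k\<le>n. pmf (binomial_pmf n q) k * exp (lam * real k))"
    using assms by (intro sum.cong refl)
      (simp add: exp_of_nat_mult[symmetric] power_mult_distrib mult.commute mult.left_commute)
  finally show ?thesis by (simp add: add.commute)
qed

lemma measure_binomial_pmf_le_exp_moment: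
  assumes q: "0 \<le> q" "q \<le> 1"
  shows "measure_pmf.prob (binomial_pmf n q) {i. x \<le> lam * (real i - n * q)}
           \<le> exp (- x - lam * n * q) * (1 - q + q * exp lam) ^ n"
proof -
  let ?p = "pmf (binomial_pmf n q)" and ?S = "{i. x \<le> lam * (real i - n * q)}"
  have "measure_pmf.prob (binomial_pmf n q) ?S = (\<Sum>k\<in>?S \<inter> {..n}. ?p k)"
    using q by (rule measure_binomial_pmf_eq_sum)
  also have "\<dots> \<le> (\<Sum>k\<in>?S \<inter> {..n}. ?p k * exp (lam * (real k - n * q) - x))"
    by (intro sum_mono) (simp add: mult_le_cancel_left1)
  also have "\<dots> \<le> (\<Sum>k\<le>n. ?p k * exp (lam * (real k - n * q) - x))"
    by (rule sum_mono2) auto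
  also have "\<dots> = exp (- x - lam * n * q) * (\<Sum>k\<le>n. ?p k * exp (lam * real k))"
    by (simp add: sum_distrib_left exp_diff exp_add exp_minus field_simps)
  finally show ?thesis
    by (simp only: binomial_pmf_mgf[OF q])
qed

lemma exp_minus_one_le_bernoulli_mgf:
  fixes q x :: real
  assumes "0 \<le> q" "q \<le> 1" "0 \<le> x" "x \<le> 1"
  shows "exp x - 1 \<le> 4 * x * (1 - q + q * exp x)"
proof -
  have "1 \<le> 1 - q + q * exp x"
    using assms mult_left_mono[of 1 "exp x" q] by simp
  then have "4 * x \<le> 4 * x * (1 - q + q * exp x)"
    using assms mult_left_mono[of 1 _ "4 * x"] by simp
  moreover have "exp x \<le> 1 + x + x\<^sup>2"
    using assms by (intro exp_bound) auto
  moreover have "x\<^sup>2 \<le> x"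
    using assms by (simp add: power2_eq_square mult_left_le)
  ultimately show ?thesis
    using assms by linarith
qed

lemma bernoulli_mgf_le_exp_minus_one:
  fixes q x :: real
  assumes "0 \<le> q" "q \<le> 1" "-1 \<le> x" "x \<le> 0"
  shows "4 * x * (1 - q + q * exp x) \<le> exp x - 1"
proof -
  have "exp (-1) \<le> exp x"
    using assms by simp
  moreover have "1 / 3 \<le> exp (-1::real)"
    using exp_le by (simp add: exp_minus field_simps)
  moreover have "exp x \<le> 1 - q + q * exp x"
    using assms mult_left_mono[of "exp x" 1 "1 - q"] by (simp add: algebra_simps)
  ultimately have "1 / 3 \<le> 1 - q + q * exp x"
    by linarith
  then have "4 * x * (1 - q + q * exp x) \<le> 4 * x * (1 / 3)"
    using assms by (intro mult_left_mono_neg) auto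
  moreover have "1 + x \<le> exp x" by simp
  ultimately show ?thesis
    using assms by linarith
qed

lemma bernoulli_mgf_le:
  fixes q lam :: real
  assumes q: "0 \<le> q" "q \<le> 1" and lam: "-1 \<le> lam" "lam \<le> 1"
  shows "1 - q + q * exp lam \<le> exp (q * lam + 2 * q * (1 - q) * lam\<^sup>2)"
proof -
  define M where "M x = 1 - q + q * exp x" for x :: real
  have M_pos: "M x > 0" for x
    using q by (cases "q = 1") (auto simp: M_def intro: add_pos_nonneg)
  define g where "g x = q * x + 2 * q * (1 - q) * x\<^sup>2 - ln (M x)" for x
  define g' where "g' x = q * (1 - q) * (4 * x * M x - (exp x - 1)) / M x" for x
  have deriv: "(g has_real_derivative g' x) (at x)" for x
    using M_pos[of x] unfolding g_def g'_def M_def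
    by (auto intro!: derivative_eq_intros simp: power2_eq_square field_simps)
  have "g 0 \<le> g lam"
  proof (cases "0 \<le> lam")
    case True
    show ?thesis
    proof (rule deriv_nonneg_imp_mono[OF deriv])
      fix x assume "x \<in> {0..lam}"
      then show "0 \<le> g' x"
        using q lam M_pos[of x] exp_minus_one_le_bernoulli_mgf[OF q, of x]
        by (auto simp: g'_def M_def intro!: divide_nonneg_pos mult_nonneg_nonneg)
    qed (use True in auto)
  next
    case False
    show ?thesis
    proof (rule deriv_nonpos_imp_antimono[OF deriv])
      fix x assume "x \<in> {lam..0}"
      then show "g' x \<le> 0"
        using q lam M_pos[of x] bernoulli_mgf_le_exp_minus_one[OF q, of x]
        by (auto simp: g'_def M_def intro!: divide_nonpos_pos mult_nonneg_nonpos)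
    qed (use False in auto)
  qed
  then have "ln (M lam) \<le> q * lam + 2 * q * (1 - q) * lam\<^sup>2"
    by (simp add: g_def M_def)
  then have "M lam \<le> exp (q * lam + 2 * q * (1 - q) * lam\<^sup>2)"
    using M_pos[of lam] by (metis exp_le_cancel_iff exp_ln)
  then show ?thesis
    by (simp add: M_def)
qed

lemma binomial_chernoff:
  assumes q: "0 \<le> q" "q \<le> 1" and lam: "\<bar>lam\<bar> \<le> 1"
  shows "measure_pmf.prob (binomial_pmf n q) {i. x \<le> lam * (real i - n * q)}
           \<le> exp (- x + 2 * real n * q * (1 - q) * lam\<^sup>2)"
proof -
  have "measure_pmf.prob (binomial_pmf n q) {i. x \<le> lam * (real i - n * q)}
          \<le> exp (- x - lam * n * q) * (1 - q + q * exp lam) ^ n"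
    using q by (rule measure_binomial_pmf_le_exp_moment)
  also have "\<dots> \<le> exp (- x - lam * n * q) * exp (q * lam + 2 * q * (1 - q) * lam\<^sup>2) ^ n"
    using q lam by (intro mult_left_mono power_mono bernoulli_mgf_le) (auto intro: add_nonneg_nonneg)
  also have "\<dots> = exp (- x + 2 * real n * q * (1 - q) * lam\<^sup>2)"
    by (simp add: exp_of_nat_mult[symmetric] exp_add[symmetric] algebra_simps)
  finally show ?thesis .
qed

lemma binomial_tails:
  fixes n :: nat and q A :: real
  assumes q: "0 \<le> q" "q \<le> 1" and A: "A > 0"
  defines "D \<equiv> 2 * sqrt (A * (2 * (n * q * (1 - q)) + A))"
  shows "measure_pmf.prob (binomial_pmf n q) {i. n * q + D \<le> real i} \<le> exp (- A)"
    and "measure_pmf.prob (binomial_pmf n q) {i. real i \<le> n * q - D} \<le> exp (- A)"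
proof -
  define v where "v = n * q * (1 - q)"
  have v: "v \<ge> 0" using q by (simp add: v_def)
  define lam where "lam = sqrt (A / (2 * v + A))"
  have frac: "0 \<le> A / (2 * v + A)" "A / (2 * v + A) \<le> 1" using A v by auto
  then have lam: "0 \<le> lam" "lam \<le> 1" by (auto simp: lam_def)
  have "lam * D = 2 * sqrt (A / (2 * v + A) * (A * (2 * v + A)))"
    unfolding lam_def D_def v_def[symmetric] by (simp add: real_sqrt_mult[symmetric])
  also have "A / (2 * v + A) * (A * (2 * v + A)) = A\<^sup>2"
    using A v by (simp add: field_simps power2_eq_square)
  finally have lamD: "lam * D = 2 * A" using A by simp
  have "2 * v * lam\<^sup>2 \<le> A"
    using frac A v by (simp add: lam_def field_simps)
  then have exponent: "- (lam * D) + 2 * real n * q * (1 - q) * lam\<^sup>2 \<le> - A"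
    using lamD by (simp add: v_def algebra_simps)
  have "measure_pmf.prob (binomial_pmf n q) {i. n * q + D \<le> real i}
          \<le> measure_pmf.prob (binomial_pmf n q) {i. lam * D \<le> lam * (real i - n * q)}"
    using lam by (intro measure_pmf.finite_measure_mono) (auto intro: mult_left_mono)
  also have "\<dots> \<le> exp (- (lam * D) + 2 * real n * q * (1 - q) * lam\<^sup>2)"
    using lam by (intro binomial_chernoff[OF q]) simp
  also have "\<dots> \<le> exp (- A)"
    using exponent by simp
  finally show "measure_pmf.prob (binomial_pmf n q) {i. n * q + D \<le> real i} \<le> exp (- A)" .
  have "measure_pmf.prob (binomial_pmf n q) {i. real i \<le> n * q - D}
          \<le> measure_pmf.prob (binomial_pmf n q) {i. lam * D \<le> - lam * (real i - n * q)}"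
    using lam by (intro measure_pmf.finite_measure_mono)
      (auto simp: mult_left_mono simp flip: mult_minus_right)
  also have "\<dots> \<le> exp (- (lam * D) + 2 * real n * q * (1 - q) * (- lam)\<^sup>2)"
    using lam by (intro binomial_chernoff[OF q]) simp
  also have "\<dots> \<le> exp (- A)"
    using exponent by simp
  finally show "measure_pmf.prob (binomial_pmf n q) {i. real i \<le> n * q - D} \<le> exp (- A)" .
qed

lemma int_le_Greatest:
  fixes P :: "int \<Rightarrow> bool"
  assumes "P c" and bounded: "\<And>x. P x \<Longrightarrow> x \<le> B"
  shows "c \<le> (GREATEST x. P x)"
proof -
  define S where "S = {x. P x \<and> c \<le> x}"
  have "finite S"
    using bounded by (intro finite_subset[of S "{c..B}"]) (auto simp: S_def)
  moreover have "c \<in> S"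
    using assms(1) by (simp add: S_def)
  ultimately have "Max S \<in> S" "c \<le> Max S"
    by (auto intro: Max_in)
  moreover have "(GREATEST x. P x) = Max S"
  proof (rule Greatest_equality)
    show "P (Max S)" using \<open>Max S \<in> S\<close> by (simp add: S_def)
    show "y \<le> Max S" if "P y" for y
      using that \<open>finite S\<close> \<open>c \<le> Max S\<close> by (cases "c \<le> y") (auto simp: S_def)
  qed
  ultimately show ?thesis by simp
qed

lemma int_Least_le:
  fixes P :: "int \<Rightarrow> bool"
  assumes "P c" and bounded: "\<And>x. P x \<Longrightarrow> B \<le> x"
  shows "(LEAST x. P x) \<le> c"
proof -
  define S where "S = {x. P x \<and> x \<le> c}"
  have "finite S"
    using bounded by (intro finite_subset[of S "{B..c}"]) (auto simp: S_def)
  moreover have "c \<in> S"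
    using assms(1) by (simp add: S_def)
  ultimately have "Min S \<in> S" "Min S \<le> c"
    by (auto intro: Min_in)
  moreover have "(LEAST x. P x) = Min S"
  proof (rule Least_equality)
    show "P (Min S)" using \<open>Min S \<in> S\<close> by (simp add: S_def)
    show "Min S \<le> y" if "P y" for y
      using that \<open>finite S\<close> \<open>Min S \<le> c\<close> by (cases "y \<le> c") (auto simp: S_def)
  qed
  ultimately show ?thesis by simp
qed

lemma measure_binomial_pmf_eq_1:
  assumes "0 \<le> q" "q \<le> 1" "{..n} \<subseteq> B"
  shows "measure_pmf.prob (binomial_pmf n q) B = 1"
  using assms by (subst measure_pmf.prob_eq_1) (auto simp: set_pmf_binomial_eq AE_measure_pmf_iff)

lemma threshold_less_1: "n \<ge> 2 \<Longrightarrow> real n powr (-(533/100)) < 1"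
  by (simp add: powr_def)

lemma le_compL:
  assumes n: "n \<ge> 2" and q: "0 \<le> q" "q \<le> 1"
    and c: "lowTail n q c \<le> real n powr (-(533/100))"
  shows "c \<le> compL n q"
proof -
  have "x \<le> int n" if "lowTail n q x \<le> real n powr (-(533/100))" for x
  proof (rule ccontr)
    assume "\<not> x \<le> int n"
    then have "lowTail n q x = 1"
      unfolding lowTail_def using q by (intro measure_binomial_pmf_eq_1) auto
    then show False using that threshold_less_1[OF n] by simp
  qed
  then show ?thesis
    unfolding compL_def using c by (auto intro: int_le_Greatest)
qed

lemma compU_le:
  assumes n: "n \<ge> 2" and q: "0 \<le> q" "q \<le> 1"
    and c: "highTail n q c \<le> real n powr (-(533/100))"
  shows "compU n q \<le> c"
proof -
  have "0 \<le> x" if "highTail n q x \<le> real n powr (-(533/100))" for x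
  proof (rule ccontr)
    assume "\<not> 0 \<le> x"
    then have "highTail n q x = 1"
      unfolding highTail_def using q by (intro measure_binomial_pmf_eq_1) auto
    then show False using that threshold_less_1[OF n] by simp
  qed
  then show ?thesis
    unfolding compU_def using c by (auto intro: int_Least_le)
qed

text \<open>With \<open>L = ln n\<close> and \<open>v = n q (1 - q)\<close>, a deviation of \<open>tail_radius L v\<close> from the mean
  has probability at most \<open>n powr (-5.33)\<close> on either side, by the Chernoff bound.\<close>

definition tail_radius :: "real \<Rightarrow> real \<Rightarrow> real" where
  "tail_radius L v = 2 * sqrt (533/100 * L * (2 * v + 533/100 * L))"

lemma compL_gt:
  assumes n: "n \<ge> 2" and q: "0 \<le> q" "q \<le> 1"
  shows "n * q - tail_radius (ln n) (n * q * (1 - q)) < compL n q"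
proof -
  define D where "D = tail_radius (ln n) (n * q * (1 - q))"
  define c where "c = \<lfloor>n * q - D\<rfloor> + 1"
  have "lowTail n q c \<le> measure_pmf.prob (binomial_pmf n q) {i. real i \<le> n * q - D}"
    unfolding lowTail_def c_def
    by (intro measure_pmf.finite_measure_mono) (auto simp: le_floor_iff)
  also have "\<dots> \<le> exp (- (533/100 * ln n))"
    using n binomial_tails(2)[OF q, of "533/100 * ln n"] by (simp add: D_def tail_radius_def)
  also have "\<dots> = real n powr (-(533/100))"
    using n by (simp add: powr_def)
  finally have "c \<le> compL n q"
    by (rule le_compL[OF n q])
  then show ?thesis
    unfolding c_def D_def by linarith
qed

lemma compU_lt:
  assumes n: "n \<ge> 2" and q: "0 \<le> q" "q \<le> 1"
  shows "compU n q < n * q + tail_radius (ln n) (n * q * (1 - q))"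
proof -
  define D where "D = tail_radius (ln n) (n * q * (1 - q))"
  define c where "c = \<lceil>n * q + D\<rceil> - 1"
  have "highTail n q c \<le> measure_pmf.prob (binomial_pmf n q) {i. n * q + D \<le> real i}"
    unfolding highTail_def c_def
    by (intro measure_pmf.finite_measure_mono) (auto, linarith)
  also have "\<dots> \<le> exp (- (533/100 * ln n))"
    using n binomial_tails(1)[OF q, of "533/100 * ln n"] by (simp add: D_def tail_radius_def)
  also have "\<dots> = real n powr (-(533/100))"
    using n by (simp add: powr_def)
  finally have "compU n q \<le> c"
    by (rule compU_le[OF n q])
  then show ?thesis
    unfolding c_def D_def by linarith
qed

lemma xi_bounds:
  assumes "0 \<le> q" "q \<le> 1"
  shows "n * q * (1 - q) \<le> xi n q" "xi n q \<le> 2 * (n * q * (1 - q))"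
proof -
  have "n * q * (1 - q) \<le> xi n q \<and> xi n q \<le> 2 * (n * q * (1 - q))"
  proof (cases "q \<le> 1/2")
    case True
    then have "q * n \<le> n - q * n"
      using mult_right_mono[of "2 * q" 1 "real n"] by simp
    then have "xi n q = n * q"
      by (simp add: xi_def min_absorb1 mult.commute)
    moreover have "n * q * (1 - q) \<le> n * q * 1" "n * q * 1 \<le> n * q * (2 * (1 - q))"
      using assms True by (intro mult_left_mono; simp)+
    ultimately show ?thesis by (simp add: algebra_simps)
  next
    case False
    then have "n - q * n \<le> q * n"
      using mult_right_mono[of 1 "2 * q" "real n"] by simp
    then have "xi n q = n * (1 - q)"
      by (simp add: xi_def min_absorb2 algebra_simps)
    moreover have "n * (1 - q) * q \<le> n * (1 - q) * 1" "n * (1 - q) * 1 \<le> n * (1 - q) * (2 * q)"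
      using assms False by (intro mult_left_mono; simp)+
    ultimately show ?thesis by (simp add: algebra_simps)
  qed
  then show "n * q * (1 - q) \<le> xi n q" "xi n q \<le> 2 * (n * q * (1 - q))"
    by auto
qed

lemma variance_le_shift:
  fixes n q q' :: real
  assumes "0 \<le> n" "0 \<le> q" "q \<le> q'" "q' \<le> 1"
  shows "n * q * (1 - q) \<le> n * q' * (1 - q') + (n * q' - n * q)"
proof -
  have "(q' - q) * (-1) \<le> (q' - q) * (1 - q' - q)"
    using assms by (intro mult_left_mono) auto
  then have "q * (1 - q) \<le> q' * (1 - q') + (q' - q)"
    by (simp add: algebra_simps)
  then have "n * (q * (1 - q)) \<le> n * (q' * (1 - q') + (q' - q))"
    using assms by (intro mult_left_mono) auto
  then show ?thesis
    by (simp add: algebra_simps)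
qed

lemma tail_radius_nonneg: "0 \<le> L \<Longrightarrow> 0 \<le> v \<Longrightarrow> 0 \<le> tail_radius L v"
  by (simp add: tail_radius_def)

lemma tail_radius_le_sqrt:
  assumes L: "0 \<le> L" and V: "4100 * L \<le> V" and v: "v \<le> 5/4 * V"
  shows "tail_radius L v \<le> 733/100 * sqrt (V * L)"
proof -
  have "533/100 * L * (2 * v + 533/100 * L) \<le> 533/100 * L * (25014/10000 * V)"
    using L V v by (intro mult_left_mono) auto
  also have "\<dots> \<le> (3665/1000)\<^sup>2 * (V * L)"
    using L V by (simp add: power2_eq_square algebra_simps mult_right_mono)
  finally have "sqrt (533/100 * L * (2 * v + 533/100 * L)) \<le> sqrt ((3665/1000)\<^sup>2 * (V * L))"
    by (rule real_sqrt_le_mono)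
  also have "\<dots> = 3665/1000 * sqrt (V * L)"
    by (simp add: real_sqrt_mult)
  finally show ?thesis
    by (simp add: tail_radius_def)
qed

lemma tail_radius_le_self:
  assumes L: "0 \<le> L" and v: "533/100 * L \<le> 105/100000 * v"
  shows "tail_radius L v \<le> 94/1000 * v"
proof -
  have v0: "0 \<le> v"
    using L v by linarith
  have "533/100 * L * (2 * v + 533/100 * L) \<le> 105/100000 * v * (2 * v + 105/100000 * v)"
    using L v v0 by (intro mult_mono[OF v]) auto
  also have "\<dots> = 21011025/10000000000 * v\<^sup>2"
    by (simp add: power2_eq_square algebra_simps)
  also have "\<dots> \<le> (47/1000 * v)\<^sup>2"
    unfolding power_mult_distrib by (intro mult_right_mono) (auto simp: power2_eq_square)
  finally have "sqrt (533/100 * L * (2 * v + 533/100 * L)) \<le> 47/1000 * v"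
    using v0 by (intro real_le_lsqrt) auto
  then show ?thesis
    by (simp add: tail_radius_def)
qed

lemma sqrt_mult_le_div_64:
  assumes "0 \<le> L" "4096 * L \<le> V"
  shows "sqrt (V * L) \<le> V / 64"
  using assms mult_left_mono[of "4096 * L" V V] by (intro real_le_lsqrt) (auto simp: power2_eq_square)

lemma variance_le_of_radius:
  assumes L: "0 \<le> L" and V: "4100 * L \<le> V" "4100 \<le> V" and s: "0 \<le> s"
    and bound: "s \<le> V + tail_radius L V + tail_radius L s + 2"
  shows "s \<le> 5/4 * V"
proof (rule ccontr)
  assume "\<not> s \<le> 5/4 * V"
  then have "tail_radius L s \<le> 94/1000 * s"
    using L V by (intro tail_radius_le_self) auto
  moreover have "tail_radius L V \<le> 733/100 * sqrt (V * L)"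
    using L V by (intro tail_radius_le_sqrt) auto
  moreover have "sqrt (V * L) \<le> V / 64"
    using L V by (intro sqrt_mult_le_div_64) auto
  ultimately show False
    using bound \<open>\<not> s \<le> 5/4 * V\<close> V by linarith
qed

lemma window_fits:
  fixes m :: real
  assumes L: "1 \<le> L" and V: "4100 * L \<le> V" and s: "0 \<le> s" "s \<le> 5/4 * V"
    and m: "0 \<le> m" "m \<le> sqrt (2 * V / L) / 264 + 1"
  shows "(m + 3) * (tail_radius L s + m + 2) \<le> V - tail_radius L V - 1"
proof -
  have "4100 \<le> V"
    using L V by linarith
  moreover have "V * 1 \<le> V * L"
    using L \<open>4100 \<le> V\<close> by (intro mult_left_mono) auto
  ultimately have V4100: "4100 \<le> V" "4100 \<le> V * L"
    by linarith+
  define u where "u = sqrt (V / L)"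
  define w where "w = sqrt (V * L)"
  have uw: "u * w = V"
    using L V by (simp add: u_def w_def real_sqrt_mult[symmetric])
  have u2: "u\<^sup>2 \<le> V"
    using L V by (simp add: u_def divide_le_eq)
  have "V / L \<le> (V / 64)\<^sup>2"
    using L V4100 mult_left_mono[of 4096 V V] by (simp add: power2_eq_square divide_le_eq)
  then have u: "0 \<le> u" "u \<le> V / 64"
    using L V4100 real_le_lsqrt[of "V / 64" "V / L"] by (auto simp: u_def)
  have w: "0 \<le> w" "w \<le> V / 64"
    using L V sqrt_mult_le_div_64[of L V] by (auto simp: w_def)
  have "sqrt (2 * V / L) = sqrt 2 * u"
    by (simp add: u_def real_sqrt_mult[symmetric])
  also have "\<dots> \<le> 1415/1000 * u"
    using u by (intro mult_right_mono real_le_lsqrt) (auto simp: power2_eq_square)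
  finally have mu: "m + 3 \<le> 536/100000 * u + 4"
    using m u by linarith
  have "tail_radius L s \<le> 733/100 * w" "tail_radius L V \<le> 733/100 * w"
    unfolding w_def using L V s V4100 by (rule_tac tail_radius_le_sqrt; linarith)+
  note Rs = this
  have "(m + 3) * (tail_radius L s + m + 2) \<le> (536/100000 * u + 4) * (733/100 * w + 536/100000 * u + 3)"
    using mu Rs m tail_radius_nonneg[of L s] L s by (intro mult_mono) auto
  also have "\<dots> = 536/100000 * 733/100 * (u * w) + 4 * 733/100 * w
      + 287296/10000000000 * u\<^sup>2 + 7 * 536/100000 * u + 12"
    by (simp add: algebra_simps power2_eq_square)
  also have "\<dots> \<le> V - tail_radius L V - 1"
    unfolding uw using u u2 w Rs L V by linarith
  finally show ?thesis .
qed

lemma binomial_pmf_Suc: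
  assumes q: "0 \<le> q" "q \<le> 1" and j: "j < n"
  shows "pmf (binomial_pmf n q) (Suc j) * (real j + 1) * (1 - q)
       = pmf (binomial_pmf n q) j * (real n - real j) * q"
proof -
  have choose_absorb: "real (Suc j) * real (n choose Suc j) = (real n - real j) * real (n choose j)"
  proof -
    have "Suc j * (n choose Suc j) = (n - j) * (n choose j)"
      using binomial_absorption[of j n] binomial_absorb_comp[of n j] by simp
    then have "real (Suc j * (n choose Suc j)) = real ((n - j) * (n choose j))" by simp
    then show ?thesis using j by (simp add: of_nat_diff algebra_simps)
  qed
  have n_minus_j: "n - j = Suc (n - Suc j)" using j by simp
  have "pmf (binomial_pmf n q) (Suc j) * (real j + 1) * (1 - q)
      = (real (Suc j) * real (n choose Suc j)) * q ^ Suc j * (1 - q) ^ Suc (n - Suc j)"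
    using q by (simp add: algebra_simps)
  also have "\<dots> = ((real n - real j) * real (n choose j)) * q ^ Suc j * (1 - q) ^ (n - j)"
    by (simp only: choose_absorb n_minus_j)
  also have "\<dots> = pmf (binomial_pmf n q) j * (real n - real j) * q"
    using q by (simp add: algebra_simps)
  finally show ?thesis .
qed

lemma binomial_pmf_ratio:
  fixes N :: real
  assumes q: "0 < q" "q < 1" and j: "j < n" and N: "N \<ge> 0"
    and cond: "(N + 1) * (real j + 1 - real n * q) \<le> (real j + 1) * (1 - q)"
  shows "N / (N + 1) * pmf (binomial_pmf n q) j \<le> pmf (binomial_pmf n q) (Suc j)"
proof -
  let ?b = "pmf (binomial_pmf n q)"
  have recurrence: "?b (Suc j) * ((real j + 1) * (1 - q)) = ?b j * ((real n - real j) * q)"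
    using binomial_pmf_Suc[of q j n] q j by (simp add: algebra_simps)
  have denom_pos: "(real j + 1) * (1 - q) > 0" using q by simp
  have cross_multiplied: "N * ((real j + 1) * (1 - q)) \<le> (N + 1) * ((real n - real j) * q)"
  proof -
    have "(N + 1) * ((real n - real j) * q) - N * ((real j + 1) * (1 - q))
        = ((real j + 1) * (1 - q) - (N + 1) * (real j + 1 - real n * q)) + (N + 1) * q"
      by (simp add: algebra_simps)
    moreover have "(N + 1) * q \<ge> 0" using N q by simp
    ultimately show ?thesis using cond by linarith
  qed
  have "N / (N + 1) * ?b j * ((real j + 1) * (1 - q)) = ?b j * (N * ((real j + 1) * (1 - q))) / (N + 1)"
    by (simp add: field_simps)
  also have "\<dots> \<le> ?b j * ((N + 1) * ((real n - real j) * q)) / (N + 1)"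
    using cross_multiplied N by (intro divide_right_mono mult_left_mono) auto
  also have "\<dots> = ?b j * ((real n - real j) * q)" using N by (simp add: field_simps)
  also have "\<dots> = ?b (Suc j) * ((real j + 1) * (1 - q))" using recurrence by simp
  finally show ?thesis using denom_pos by (simp only: mult_le_cancel_right_pos)
qed

lemma geometric_run_sum_ge:
  fixes b :: "nat \<Rightarrow> real" and a l m :: nat
  assumes rho: "0 \<le> rho" "rho \<le> 1" and b_a: "0 \<le> b a"
    and step: "\<And>j. a \<le> j \<Longrightarrow> j < a + l + m \<Longrightarrow> rho * b j \<le> b (Suc j)"
  shows "real m * rho ^ (l + m) * b a \<le> (\<Sum>i = 1..m. b (a + l + i))"
proof -
  have run: "rho ^ i * b a \<le> b (a + i)" if "i \<le> l + m" for i
    using that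
  proof (induction i)
    case (Suc i)
    then have "rho * (rho ^ i * b a) \<le> rho * b (a + i)"
      using rho by (intro mult_left_mono) auto
    also have "\<dots> \<le> b (a + Suc i)"
      using step[of "a + i"] Suc.prems by simp
    finally show ?case by (simp add: algebra_simps)
  qed simp
  have "rho ^ (l + m) * b a \<le> b (a + l + i)" if "i \<in> {1..m}" for i
  proof -
    have "rho ^ (l + m) * b a \<le> rho ^ (l + i) * b a"
      using that rho b_a by (intro mult_right_mono power_decreasing) auto
    also have "\<dots> \<le> b (a + l + i)"
      using run[of "l + i"] that by (simp add: add.assoc)
    finally show ?thesis .
  qed
  then have "(\<Sum>i = 1..m. rho ^ (l + m) * b a) \<le> (\<Sum>i = 1..m. b (a + l + i))"
    by (rule sum_mono)
  then show ?thesis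
    by simp
qed

lemma exp_minus_one_le_power:
  assumes "N \<ge> 1"
  shows "exp (-1) \<le> (real N / (real N + 1)) ^ N"
proof -
  have pos: "0 < (1 + 1 / real N) ^ N"
    by (simp add: add_pos_nonneg)
  have "exp (-1) = inverse (exp (1::real))"
    by (rule exp_minus)
  also have "\<dots> \<le> inverse ((1 + 1 / real N) ^ N)"
    using assms pos by (intro le_imp_inverse_le exp_ge_one_plus_x_over_n_power_n) auto
  also have "\<dots> = (real N / (real N + 1)) ^ N"
    using assms by (simp add: power_inverse field_simps)
  finally show ?thesis .
qed

lemma binomial_pmf_le_upper_tail:
  fixes a l m :: nat
  assumes q: "0 < q" "q < 1" and m: "1 \<le> m" and l: "l \<le> 2" and fits: "a + l + m \<le> n"
    and ratio: "\<And>j. a \<le> j \<Longrightarrow> j < a + l + m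
                  \<Longrightarrow> (real m + 3) * (real j + 1 - n * q) \<le> (real j + 1) * (1 - q)"
  shows "pmf (binomial_pmf n q) a
           \<le> exp 1 / m * measure_pmf.prob (binomial_pmf n q) {i. a + l < i}"
proof -
  let ?b = "pmf (binomial_pmf n q)"
  define rho where "rho = real (m + 2) / (real (m + 2) + 1)"
  have rho: "0 \<le> rho" "rho \<le> 1"
    by (auto simp: rho_def)
  have "rho * ?b j \<le> ?b (Suc j)" if "a \<le> j" "j < a + l + m" for j
    using binomial_pmf_ratio[OF q, of j n "real (m + 2)"] ratio[OF that] that fits
    by (simp add: rho_def add.commute)
  then have "real m * rho ^ (l + m) * ?b a \<le> (\<Sum>i = 1..m. ?b (a + l + i))"
    by (intro geometric_run_sum_ge rho) auto
  also have "\<dots> = sum ?b ((\<lambda>i. a + l + i) ` {1..m})"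
    by (subst sum.reindex) (auto simp: inj_on_def)
  also have "\<dots> = measure_pmf.prob (binomial_pmf n q) ((\<lambda>i. a + l + i) ` {1..m})"
    by (rule measure_measure_pmf_finite[symmetric]) simp
  also have "\<dots> \<le> measure_pmf.prob (binomial_pmf n q) {i. a + l < i}"
    by (intro measure_pmf.finite_measure_mono) auto
  finally have tail: "real m * rho ^ (l + m) * ?b a \<le> measure_pmf.prob (binomial_pmf n q) {i. a + l < i}" .
  have "exp (-1) \<le> rho ^ (m + 2)"
    unfolding rho_def by (rule exp_minus_one_le_power) simp
  also have "\<dots> \<le> rho ^ (l + m)"
    using rho l by (intro power_decreasing) auto
  finally have "real m * exp (-1) * ?b a \<le> real m * rho ^ (l + m) * ?b a"
    by (simp add: mult_right_mono mult_left_mono)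
  then have "real m * exp (-1) * ?b a \<le> measure_pmf.prob (binomial_pmf n q) {i. a + l < i}"
    using tail by linarith
  with m show ?thesis
    by (simp add: exp_minus field_simps)
qed

lemma comfort_window:
  fixes n q qt h m Rt Rk :: real
  assumes q: "0 \<le> q" "q \<le> qt" "qt \<le> 1" and n: "0 \<le> n"
    and R: "0 \<le> Rt" "0 \<le> Rk" and m: "0 \<le> m"
    and h_lower: "n * qt - Rt < h" and h_upper: "h - 2 < n * q + Rk"
    and window: "(m + 3) * (Rk + m + 2) \<le> n * qt * (1 - qt) - Rt - 1"
  shows "7 < h" "0 < q" "q < 1" "h + m < n"
    and "\<And>j. h - 2 \<le> j \<Longrightarrow> j + 1 \<le> h + m
           \<Longrightarrow> (m + 3) * (j + 1 - n * q) \<le> (j + 1) * (1 - q)"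
proof -
  define V where "V = n * qt * (1 - qt)"
  have "V \<le> n * qt * 1"
    unfolding V_def using q n by (intro mult_left_mono) auto
  moreover have "V = n * (1 - qt) * qt"
    by (simp add: V_def algebra_simps)
  moreover have "\<dots> \<le> n * (1 - qt) * 1"
    using q n by (intro mult_left_mono) auto
  moreover have "n * (1 - qt) \<le> n * (1 - q)"
    using q n by (intro mult_left_mono) auto
  ultimately have V_le: "V \<le> n * qt" "V \<le> n * (1 - q)"
    by simp_all
  define W where "W = (m + 3) * (Rk + m + 2)"
  have "3 * (Rk + 2) \<le> W" "1 * (Rk + m + 2) \<le> W"
    unfolding W_def using R m by (intro mult_mono; simp)+
  then have W: "3 * Rk + 6 \<le> W" "Rk + m + 2 \<le> W"
    by simp_all
  note window = window[folded V_def W_def]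
  show h7: "7 < h"
    using h_lower window W V_le R by linarith
  have "0 < n * q"
    using h_lower h_upper window W V_le R by linarith
  then show "0 < q"
    using n by (simp add: zero_less_mult_iff)
  have "qt \<noteq> 1"
    using window W R by (auto simp: V_def)
  then show "q < 1"
    using q by simp
  show "h + m < n"
    using h_upper window W V_le R by (simp add: algebra_simps)
  fix j assume j: "h - 2 \<le> j" "j + 1 \<le> h + m"
  have "(m + 3) * (j + 1 - n * q) \<le> W"
    unfolding W_def using j h_upper m by (intro mult_left_mono) auto
  also have "\<dots> \<le> V - (Rt + 1)"
    using window by simp
  also have "\<dots> \<le> V - (Rt + 1) * (1 - qt)"
  proof -
    have "(Rt + 1) * (1 - qt) \<le> Rt + 1"
      using R q by (intro mult_left_le) auto
    then show ?thesis by linarith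
  qed
  also have "\<dots> = (n * qt - Rt - 1) * (1 - qt)"
    by (simp add: V_def algebra_simps)
  also have "\<dots> \<le> (j + 1) * (1 - q)"
    using h_lower j h7 q by (intro mult_mono) auto
  finally show "(m + 3) * (j + 1 - n * q) \<le> (j + 1) * (1 - q)" .
qed

lemma comfort_zone_window:
  fixes n m :: nat and q qt :: real and h :: int
  assumes n: "2 \<le> n" and L: "1 \<le> ln n" and q: "0 \<le> q" "q \<le> qt" "qt \<le> 1"
    and V: "4100 * ln n \<le> n * qt * (1 - qt)"
    and m: "m \<le> sqrt (2 * (n * qt * (1 - qt)) / ln n) / 264 + 1"
    and h: "h \<in> comfortZone n qt" "h - 2 \<in> comfortZone n q"
  shows "7 < h" "0 < q" "q < 1" "h + m < n"
    and "\<And>j :: real. h - 2 \<le> j \<Longrightarrow> j + 1 \<le> h + m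
           \<Longrightarrow> (real m + 3) * (j + 1 - n * q) \<le> (j + 1) * (1 - q)"
proof -
  define L V s where "L = ln n" and "V = n * qt * (1 - qt)" and "s = n * q * (1 - q)"
  define Rt Rk where "Rt = tail_radius L V" and "Rk = tail_radius L s"
  have V: "4100 * L \<le> V" "0 \<le> s"
    using V q by (simp_all add: L_def V_def s_def)
  have R: "0 \<le> Rt" "0 \<le> Rk"
    using L V by (simp_all add: L_def Rt_def Rk_def tail_radius_nonneg)
  have h_lower: "n * qt - Rt < h"
    using compL_gt[OF n, of qt] q h(1) by (simp add: comfortZone_def Rt_def V_def L_def)
  have h_upper: "real_of_int h - 2 < n * q + Rk"
    using compU_lt[OF n, of q] q h(2) by (simp add: comfortZone_def Rk_def s_def L_def)
  have "s \<le> V + Rt + Rk + 2"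
    using variance_le_shift[of n q qt] q h_lower h_upper by (simp add: s_def V_def)
  then have "s \<le> 5/4 * V"
    using L V by (intro variance_le_of_radius) (auto simp: L_def Rt_def Rk_def)
  then have "(real m + 3) * (Rk + m + 2) \<le> V - Rt - 1"
    unfolding Rt_def Rk_def using L V m by (intro window_fits) (auto simp: L_def V_def)
  from comfort_window[OF q of_nat_0_le_iff R of_nat_0_le_iff h_lower h_upper this[unfolded V_def]]
  show "7 < h" "0 < q" "q < 1" "h + m < n"
    and "\<And>j :: real. h - 2 \<le> j \<Longrightarrow> j + 1 \<le> h + m
           \<Longrightarrow> (real m + 3) * (j + 1 - n * q) \<le> (j + 1) * (1 - q)"
    by auto
qed

lemma exists_window_length:
  fixes r :: real
  assumes "0 < r"
  obtains m :: nat where "1 \<le> m" "m \<le> r + 1" "1 / real m \<le> 1 / r"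
proof
  show "1 \<le> nat \<lceil>r\<rceil>" "nat \<lceil>r\<rceil> \<le> r + 1"
    using assms by linarith+
  have "r \<le> nat \<lceil>r\<rceil>"
    by linarith
  then show "1 / real (nat \<lceil>r\<rceil>) \<le> 1 / r"
    using assms by (intro divide_left_mono) auto
qed

theorem mainTheorem9:
  fixes n :: nat and p :: "nat \<Rightarrow> real" and t k l :: nat and h :: int
  assumes "n \<ge> 10^6"
    and "\<forall>j\<le>n. 0 \<le> p j \<and> p j \<le> 1"
    and "t \<le> n" and "\<forall>j\<le>n. p j \<le> p t"
    and "xi n (p t) \<ge> 8200 * ln (real n)"
    and "l \<le> 2"
    and "k \<le> n"
    and "h \<in> comfortZone n (p t)"
    and "h - 2 \<in> comfortZone n (p k)"
  shows "measure_pmf.prob (binomial_pmf n (p k)) {i. int i = h - int l}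
         \<le> 264 * exp 1 * sqrt (ln (real n) / xi n (p t))
           * measure_pmf.prob (binomial_pmf n (p k)) {i. int i > h}"
proof -
  define qt q L X where "qt = p t" and "q = p k" and "L = ln (real n)" and "X = xi n qt"
  have n: "2 \<le> n" and L: "1 \<le> L"
    using assms(1) exp_le by (simp_all add: L_def ln_ge_iff)
  have q: "0 \<le> q" "q \<le> qt" "qt \<le> 1"
    using assms(2-4,7) by (auto simp: qt_def q_def)
  have X: "X \<le> 2 * (n * qt * (1 - qt))" "8200 * L \<le> X"
    using xi_bounds[of qt n] q assms(5) by (simp_all add: X_def L_def qt_def)
  then have V: "4100 * L \<le> n * qt * (1 - qt)"
    by linarith
  have "0 < sqrt (X / L) / 264"
    using X L by simp
  then obtain m :: nat where m: "1 \<le> m" "m \<le> sqrt (X / L) / 264 + 1"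
      and inverse_m: "1 / real m \<le> 1 / (sqrt (X / L) / 264)"
    by (rule exists_window_length)
  have "sqrt (X / L) \<le> sqrt (2 * (n * qt * (1 - qt)) / L)"
    using X L by (simp add: divide_right_mono)
  then have "m \<le> sqrt (2 * (n * qt * (1 - qt)) / L) / 264 + 1"
    using m by linarith
  note window = comfort_zone_window[OF n L[unfolded L_def] q V[unfolded L_def]
      this[unfolded L_def] assms(8,9)[folded qt_def q_def]]
  define a where "a = nat (h - l)"
  have a: "int (a + l) = h"
    using window(1) assms(6) by (simp add: a_def)
  have "pmf (binomial_pmf n q) a \<le> exp 1 / m * measure_pmf.prob (binomial_pmf n q) {i. a + l < i}"
  proof (rule binomial_pmf_le_upper_tail)
    show "0 < q" "q < 1" "a + l + m \<le> n"
      using window(2-4) a by auto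
    show "(real m + 3) * (real j + 1 - n * q) \<le> (real j + 1) * (1 - q)"
      if "a \<le> j" "j < a + l + m" for j
      using that a assms(6) by (intro window(5)) linarith+
  qed (use m assms(6) in auto)
  also have "\<dots> \<le> 264 * exp 1 * sqrt (L / X) * measure_pmf.prob (binomial_pmf n q) {i. a + l < i}"
  proof (rule mult_right_mono)
    have "exp 1 / real m = exp 1 * (1 / real m)"
      by simp
    also have "\<dots> \<le> exp 1 * (1 / (sqrt (X / L) / 264))"
      using inverse_m by (rule mult_left_mono) simp
    also have "\<dots> = 264 * exp 1 * sqrt (L / X)"
      by (simp add: real_sqrt_divide)
    finally show "exp 1 / real m \<le> 264 * exp 1 * sqrt (L / X)" .
  qed simp
  moreover have "{i. int i = h - int l} = {a}" "{i. a + l < i} = {i. h < int i}"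
    using a by auto
  ultimately show ?thesis
    by (simp add: measure_pmf_single q_def qt_def L_def X_def)
qed

end
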